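(* Let $V$ be a valuation domain with quotient field $K$, and let $W_1,W_2$ be torsion extensions of $V$ to $K(X)$, with valuations $w_1,w_2$ and maximal ideals $M_1,M_2$. Then: (1) The following are equivalent: (a) $w_1\le w_2$; (b) $W_1\cap K[X]\subseteq W_2\cap K[X]$; (c) $M_1\cap K[X]\subseteq M_2\cap K[X]$. (2) $W_1=W_2$ if and only if $W_1\cap K[X]=W_2\cap K[X]$, if and only if $M_1\cap K[X]=M_2\cap K[X]$. (3) The set $\mathcal{W}_{\mathrm t}$ of torsion extensions of $V$ to $K(X)$ is partially ordered by $\le$.
   Context: Let $v$ be the valuation of $V$, $\Gamma_v$ its value group, $\Gamma_{\overline{v}}=\Gamma_v\otimes_{\mathbb{Z}}\mathbb{Q}$. An extension of $V$ to $K(X)$ is a valuation domain $W$ of $K(X)$ with $W\cap K=V$; it is a torsion extension if its value group $\Gamma_w$ is contained in $\Gamma_{\overline{v}}$ (i.e. $\Gamma_w/\Gamma_v$ is torsion). For torsion extensions, $w_1\le w_2$ means $w_1(f)\le w_2(f)$ in $\Gamma_{\overline{v}}$ for all $f\in K[X]$. *)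

theory Defs
  imports "HOL-Computational_Algebra.Polynomial" "HOL-Computational_Algebra.Fraction_Field"
begin

text \<open>A (Krull) valuation on a field, given on the nonzero elements
  (the value at 0 is irrelevant and stands for infinity).\<close>
definition valuation :: "('k::field \<Rightarrow> 'g::linordered_ab_group_add) \<Rightarrow> bool" where
  "valuation v \<longleftrightarrow>
     (\<forall>x y. x \<noteq> 0 \<longrightarrow> y \<noteq> 0 \<longrightarrow> v (x * y) = v x + v y) \<and>
     (\<forall>x y. x \<noteq> 0 \<longrightarrow> y \<noteq> 0 \<longrightarrow> x + y \<noteq> 0 \<longrightarrow> min (v x) (v y) \<le> v (x + y))"

definition val_ring :: "('k::field \<Rightarrow> 'g::linordered_ab_group_add) \<Rightarrow> 'k set" where
  "val_ring v = {x. x = 0 \<or> 0 \<le> v x}"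

definition max_ideal :: "'k::field set \<Rightarrow> 'k set" where
  "max_ideal W = {x \<in> W. x = 0 \<or> inverse x \<notin> W}"

definition const_fr :: "'a::field \<Rightarrow> 'a poly fract" where
  "const_fr c = Fract [:c:] 1"

definition poly_fr :: "'a::field poly \<Rightarrow> 'a poly fract" where
  "poly_fr p = Fract p 1"

definition Kpoly :: "'a::field poly fract set" where
  "Kpoly = range poly_fr"

definition gmult :: "nat \<Rightarrow> 'g::linordered_ab_group_add \<Rightarrow> 'g" where
  "gmult n x = ((+) x ^^ n) 0"

definition torsion_ext :: "('a::field \<Rightarrow> 'g::linordered_ab_group_add) \<Rightarrow> ('a poly fract \<Rightarrow> 'g) \<Rightarrow> bool" where
  "torsion_ext v w \<longleftrightarrow> valuation w \<and>
     (\<forall>c. c \<noteq> 0 \<longrightarrow> w (const_fr c) = v c) \<and>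
     (\<forall>f. f \<noteq> 0 \<longrightarrow> (\<exists>n>0. \<exists>a. a \<noteq> 0 \<and> gmult n (w f) = v a))"

definition val_le :: "('a::field poly fract \<Rightarrow> 'g::linordered_ab_group_add) \<Rightarrow> ('a poly fract \<Rightarrow> 'g) \<Rightarrow> bool" where
  "val_le w1 w2 \<longleftrightarrow> (\<forall>p. p \<noteq> 0 \<longrightarrow> w1 (poly_fr p) \<le> w2 (poly_fr p))"

definition torsion_exts :: "('a::field \<Rightarrow> 'g::linordered_ab_group_add) \<Rightarrow> 'a poly fract set set" where
  "torsion_exts v = {val_ring w | w :: 'a poly fract \<Rightarrow> 'g. torsion_ext v w}"

definition torsion_le :: "('a::field \<Rightarrow> 'g::linordered_ab_group_add) \<Rightarrow> 'a poly fract set rel" where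
  "torsion_le v = {(val_ring w1, val_ring w2) | (w1 :: 'a poly fract \<Rightarrow> 'g) w2.
      torsion_ext v w1 \<and> torsion_ext v w2 \<and> val_le w1 w2}"

end

theory Submission
  imports Defs
begin

text \<open>Since the value group of a torsion extension w is torsion over that of v, every
  nonzero f has a power f^n whose value is the value v(a) of a constant, so that
  f^n / a is a unit of W. If w2(f) < w1(f) for some polynomial f, normalising with
  respect to w1 gives a polynomial in W1 of negative w2-value, and normalising with
  respect to w2 gives a polynomial in M1 that is a unit of W2; both only use that
  K[X] is multiplicatively closed and contains K. Valuations that agree on K[X]
  agree on K(X), since every rational function is a quotient of polynomials; this
  gives (2), and (2) makes the order on valuation domains well defined and
  antisymmetric.\<close>

lemma gmult_0 [simp]: "gmult 0 x = 0"
  by (simp add: gmult_def)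

lemma gmult_Suc [simp]: "gmult (Suc n) x = x + gmult n x"
  by (simp add: gmult_def)

lemma gmult_strict_mono:
  fixes x y :: "'g::linordered_ab_group_add"
  assumes "x < y" and "0 < n"
  shows "gmult n x < gmult n y"
  using assms(2)
proof (induction n)
  case (Suc n)
  then show ?case
    using \<open>x < y\<close> by (cases "n = 0") (simp_all add: add_strict_mono)
qed simp

lemma valuation_mult: "valuation w \<Longrightarrow> x \<noteq> 0 \<Longrightarrow> y \<noteq> 0 \<Longrightarrow> w (x * y) = w x + w y"
  by (simp add: valuation_def)

lemma valuation_one: "valuation w \<Longrightarrow> w 1 = 0"
  using valuation_mult[of w 1 1] by simp

lemma valuation_inverse:
  assumes "valuation w" and "(x::'k::field) \<noteq> 0"
  shows "w (inverse x) = - w x"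
  using valuation_mult[OF assms(1), of x "inverse x"] valuation_one[OF assms(1)] assms(2)
  by (simp add: eq_neg_iff_add_eq_0 add.commute)

lemma valuation_divide:
  "valuation w \<Longrightarrow> (x::'k::field) \<noteq> 0 \<Longrightarrow> y \<noteq> 0 \<Longrightarrow> w (x / y) = w x - w y"
  by (simp add: divide_inverse valuation_mult valuation_inverse)

lemma valuation_power: "valuation w \<Longrightarrow> (x::'k::field) \<noteq> 0 \<Longrightarrow> w (x ^ n) = gmult n (w x)"
  by (induction n) (auto simp: valuation_one valuation_mult)

lemma max_ideal_val_ring_iff:
  "valuation w \<Longrightarrow> (x::'k::field) \<noteq> 0 \<Longrightarrow> x \<in> max_ideal (val_ring w) \<longleftrightarrow> 0 < w x"
  by (auto simp: max_ideal_def val_ring_def valuation_inverse)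

lemma val_ring_cong: "(\<And>x. x \<noteq> 0 \<Longrightarrow> w1 x = w2 x) \<Longrightarrow> val_ring w1 = val_ring w2"
  unfolding val_ring_def by (intro Collect_cong) metis

lemma poly_fr_eq_0_iff [simp]: "poly_fr p = 0 \<longleftrightarrow> p = 0"
  by (simp add: poly_fr_def Zero_fract_def eq_fract)

lemma const_fr_eq_0_iff [simp]: "const_fr c = 0 \<longleftrightarrow> c = 0"
  by (simp add: const_fr_def Zero_fract_def eq_fract)

lemma const_fr_1 [simp]: "const_fr 1 = 1"
  by (simp add: const_fr_def One_fract_def one_pCons)

lemma const_fr_inverse: "const_fr (inverse c) = inverse (const_fr c)"
  by (cases "c = 0") (simp_all add: const_fr_def eq_fract)

lemma poly_fr_mult: "poly_fr (p * q) = poly_fr p * poly_fr q"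
  by (simp add: poly_fr_def)

lemma const_fr_in_Kpoly: "const_fr c \<in> Kpoly"
  by (simp add: Kpoly_def const_fr_def poly_fr_def)

lemma Kpoly_mult_closed: "f \<in> Kpoly \<Longrightarrow> g \<in> Kpoly \<Longrightarrow> f * g \<in> Kpoly"
  by (auto simp: Kpoly_def poly_fr_mult[symmetric])

lemma fract_eq_poly_fr_divide: "\<exists>p q. q \<noteq> 0 \<and> f = poly_fr p / poly_fr q"
proof (cases f)
  case (Fract p q)
  then show ?thesis by (intro exI[of _ p] exI[of _ q]) (simp add: poly_fr_def)
qed

lemma val_le_iff_Kpoly: "val_le w1 w2 \<longleftrightarrow> (\<forall>f\<in>Kpoly. f \<noteq> 0 \<longrightarrow> w1 f \<le> w2 f)"
  by (auto simp: val_le_def Kpoly_def)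

lemma val_le_refl: "val_le w w"
  by (simp add: val_le_def)

lemma val_le_trans: "val_le w1 w2 \<Longrightarrow> val_le w2 w3 \<Longrightarrow> val_le w1 w3"
  unfolding val_le_def by (blast intro: order_trans)

lemma valuation_eq_if_eq_on_polys:
  assumes "valuation w1" and "valuation w2"
    and polys: "\<And>p. p \<noteq> 0 \<Longrightarrow> w1 (poly_fr p) = w2 (poly_fr p)"
    and "f \<noteq> 0"
  shows "w1 f = w2 f"
proof -
  obtain p q where "q \<noteq> 0" and f: "f = poly_fr p / poly_fr q"
    using fract_eq_poly_fr_divide by blast
  moreover have "p \<noteq> 0"
    using \<open>f \<noteq> 0\<close> f by auto
  ultimately show ?thesis
    using assms(1,2) polys by (simp add: valuation_divide)
qed

lemma torsion_ext_normalize: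
  assumes w: "torsion_ext v w" and u: "torsion_ext v u" and "f \<noteq> 0"
  obtains n c where "0 < n" and "c \<noteq> 0"
    and "w (f ^ n * const_fr c) = 0"
    and "u (f ^ n * const_fr c) = gmult n (u f) - gmult n (w f)"
proof -
  have "valuation w" "valuation u"
    and const: "\<And>c. c \<noteq> 0 \<Longrightarrow> w (const_fr c) = v c" "\<And>c. c \<noteq> 0 \<Longrightarrow> u (const_fr c) = v c"
    using w u by (simp_all add: torsion_ext_def)
  obtain n a where "0 < n" "a \<noteq> 0" and na: "gmult n (w f) = v a"
    using w \<open>f \<noteq> 0\<close> by (auto simp: torsion_ext_def)
  have quotient_value: "x (f ^ n * const_fr (inverse a)) = gmult n (x f) - v a"
    if "valuation x" and "x (const_fr a) = v a" for x :: "'a poly fract \<Rightarrow> 'b"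
    using that \<open>f \<noteq> 0\<close> \<open>a \<noteq> 0\<close>
    by (simp add: const_fr_inverse valuation_mult valuation_inverse valuation_power)
  show ?thesis
  proof (rule that[OF \<open>0 < n\<close>, of "inverse a"])
    show "w (f ^ n * const_fr (inverse a)) = 0"
      using quotient_value[OF \<open>valuation w\<close> const(1)[OF \<open>a \<noteq> 0\<close>]] na by simp
    show "u (f ^ n * const_fr (inverse a)) = gmult n (u f) - gmult n (w f)"
      using quotient_value[OF \<open>valuation u\<close> const(2)[OF \<open>a \<noteq> 0\<close>]] na by simp
  qed (use \<open>a \<noteq> 0\<close> in simp)
qed

lemma mult_closed_power:
  assumes "1 \<in> S" and "\<And>f g. f \<in> S \<Longrightarrow> g \<in> S \<Longrightarrow> f * g \<in> S" and "f \<in> S"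
  shows "f ^ n \<in> S"
  using assms by (induction n) simp_all

context
  fixes v :: "'a::field \<Rightarrow> 'g::linordered_ab_group_add"
    and w1 w2 :: "'a poly fract \<Rightarrow> 'g"
    and S :: "'a poly fract set"
  assumes t1: "torsion_ext v w1" and t2: "torsion_ext v w2"
    and S_const: "\<And>c. const_fr c \<in> S"
    and S_mult: "\<And>f g. f \<in> S \<Longrightarrow> g \<in> S \<Longrightarrow> f * g \<in> S"
begin

private lemma S_normalized: "f \<in> S \<Longrightarrow> f ^ n * const_fr c \<in> S"
  using mult_closed_power[of S] S_const[of 1] S_mult S_const by simp

lemma torsion_ext_le_on_iff_val_ring_subset:
  "(\<forall>f\<in>S. f \<noteq> 0 \<longrightarrow> w1 f \<le> w2 f) \<longleftrightarrow> val_ring w1 \<inter> S \<subseteq> val_ring w2 \<inter> S"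
proof
  assume "\<forall>f\<in>S. f \<noteq> 0 \<longrightarrow> w1 f \<le> w2 f"
  then show "val_ring w1 \<inter> S \<subseteq> val_ring w2 \<inter> S"
    by (force simp: val_ring_def)
next
  assume sub: "val_ring w1 \<inter> S \<subseteq> val_ring w2 \<inter> S"
  show "\<forall>f\<in>S. f \<noteq> 0 \<longrightarrow> w1 f \<le> w2 f"
  proof (intro ballI impI leI notI)
    fix f assume "f \<in> S" "f \<noteq> 0" "w2 f < w1 f"
    obtain n c where "0 < n" "c \<noteq> 0" and w1_g: "w1 (f ^ n * const_fr c) = 0"
      and w2_g: "w2 (f ^ n * const_fr c) = gmult n (w2 f) - gmult n (w1 f)"
      using torsion_ext_normalize[OF t1 t2 \<open>f \<noteq> 0\<close>] .
    have "f ^ n * const_fr c \<in> val_ring w1 \<inter> S"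
      using w1_g S_normalized[OF \<open>f \<in> S\<close>] by (simp add: val_ring_def)
    moreover have "w2 (f ^ n * const_fr c) < 0"
      using w2_g gmult_strict_mono[OF \<open>w2 f < w1 f\<close> \<open>0 < n\<close>] by simp
    ultimately show False
      using sub \<open>f \<noteq> 0\<close> \<open>c \<noteq> 0\<close> by (auto simp: val_ring_def)
  qed
qed

lemma torsion_ext_le_on_iff_max_ideal_subset:
  "(\<forall>f\<in>S. f \<noteq> 0 \<longrightarrow> w1 f \<le> w2 f)
     \<longleftrightarrow> max_ideal (val_ring w1) \<inter> S \<subseteq> max_ideal (val_ring w2) \<inter> S"
proof -
  have "valuation w1" "valuation w2"
    using t1 t2 by (simp_all add: torsion_ext_def)
  note M1 = max_ideal_val_ring_iff[OF \<open>valuation w1\<close>]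
    and M2 = max_ideal_val_ring_iff[OF \<open>valuation w2\<close>]
  show ?thesis
  proof
    assume "\<forall>f\<in>S. f \<noteq> 0 \<longrightarrow> w1 f \<le> w2 f"
    then show "max_ideal (val_ring w1) \<inter> S \<subseteq> max_ideal (val_ring w2) \<inter> S"
      using M1 M2 by (force simp: max_ideal_def val_ring_def)
  next
    assume sub: "max_ideal (val_ring w1) \<inter> S \<subseteq> max_ideal (val_ring w2) \<inter> S"
    show "\<forall>f\<in>S. f \<noteq> 0 \<longrightarrow> w1 f \<le> w2 f"
    proof (intro ballI impI leI notI)
      fix f assume "f \<in> S" "f \<noteq> 0" "w2 f < w1 f"
      obtain n c where "0 < n" "c \<noteq> 0" and w2_g: "w2 (f ^ n * const_fr c) = 0"
        and w1_g: "w1 (f ^ n * const_fr c) = gmult n (w1 f) - gmult n (w2 f)"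
        using torsion_ext_normalize[OF t2 t1 \<open>f \<noteq> 0\<close>] .
      have "0 < w1 (f ^ n * const_fr c)"
        using w1_g gmult_strict_mono[OF \<open>w2 f < w1 f\<close> \<open>0 < n\<close>] by simp
      then have "f ^ n * const_fr c \<in> max_ideal (val_ring w1) \<inter> S"
        using M1 \<open>f \<noteq> 0\<close> \<open>c \<noteq> 0\<close> S_normalized[OF \<open>f \<in> S\<close>] by simp
      then show False
        using sub M2 w2_g \<open>f \<noteq> 0\<close> \<open>c \<noteq> 0\<close> by auto
    qed
  qed
qed

end

lemma torsion_ext_val_le_iff_val_ring_subset:
  "torsion_ext v w1 \<Longrightarrow> torsion_ext v w2 \<Longrightarrow>
     val_le w1 w2 \<longleftrightarrow> val_ring w1 \<inter> Kpoly \<subseteq> val_ring w2 \<inter> Kpoly"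
  unfolding val_le_iff_Kpoly
  by (rule torsion_ext_le_on_iff_val_ring_subset[OF _ _ const_fr_in_Kpoly Kpoly_mult_closed])

lemma torsion_ext_val_le_iff_max_ideal_subset:
  "torsion_ext v w1 \<Longrightarrow> torsion_ext v w2 \<Longrightarrow>
     val_le w1 w2 \<longleftrightarrow> max_ideal (val_ring w1) \<inter> Kpoly \<subseteq> max_ideal (val_ring w2) \<inter> Kpoly"
  unfolding val_le_iff_Kpoly
  by (rule torsion_ext_le_on_iff_max_ideal_subset[OF _ _ const_fr_in_Kpoly Kpoly_mult_closed])

lemma torsion_ext_val_ring_eq_iff:
  assumes t1: "torsion_ext v w1" and t2: "torsion_ext v w2"
  shows "val_ring w1 = val_ring w2 \<longleftrightarrow> val_le w1 w2 \<and> val_le w2 w1"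
proof
  assume "val_ring w1 = val_ring w2"
  then show "val_le w1 w2 \<and> val_le w2 w1"
    using torsion_ext_val_le_iff_val_ring_subset[OF t1 t2]
      torsion_ext_val_le_iff_val_ring_subset[OF t2 t1] by simp
next
  assume "val_le w1 w2 \<and> val_le w2 w1"
  then have "w1 (poly_fr p) = w2 (poly_fr p)" if "p \<noteq> 0" for p
    using that by (auto simp: val_le_def intro: order_antisym)
  with t1 t2 show "val_ring w1 = val_ring w2"
    by (intro val_ring_cong) (rule valuation_eq_if_eq_on_polys; simp add: torsion_ext_def)
qed

lemma torsion_le_iff:
  assumes t1: "torsion_ext v w1" and t2: "torsion_ext v w2"
  shows "(val_ring w1, val_ring w2) \<in> torsion_le v \<longleftrightarrow> val_le w1 w2"
proof
  assume "(val_ring w1, val_ring w2) \<in> torsion_le v"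
  then obtain u1 u2 :: "'a poly fract \<Rightarrow> 'b" where
    "torsion_ext v u1" "torsion_ext v u2" "val_le u1 u2"
    "val_ring w1 = val_ring u1" "val_ring w2 = val_ring u2"
    unfolding torsion_le_def by blast
  with t1 t2 show "val_le w1 w2"
    using torsion_ext_val_ring_eq_iff by (metis val_le_trans)
qed (use t1 t2 in \<open>auto simp: torsion_le_def\<close>)

lemma torsion_leE:
  assumes "(x, y) \<in> torsion_le v"
  obtains w1 w2 :: "'a::field poly fract \<Rightarrow> 'g::linordered_ab_group_add"
  where "torsion_ext v w1" "torsion_ext v w2" "x = val_ring w1" "y = val_ring w2"
  using assms unfolding torsion_le_def by blast

lemma partial_order_torsion_le: "partial_order_on (torsion_exts v) (torsion_le v)"
  unfolding partial_order_on_def preorder_on_def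
proof (intro conjI)
  show "torsion_le v \<subseteq> torsion_exts v \<times> torsion_exts v"
    by (auto simp: torsion_le_def torsion_exts_def)
  show "refl_on (torsion_exts v) (torsion_le v)"
    by (rule refl_onI) (auto simp: torsion_exts_def torsion_le_iff val_le_refl)
  show "trans (torsion_le v)"
  proof (rule transI)
    fix x y z assume xy: "(x, y) \<in> torsion_le v" and yz: "(y, z) \<in> torsion_le v"
    obtain w1 w2 where "torsion_ext v w1" "torsion_ext v w2" "x = val_ring w1" "y = val_ring w2"
      using xy by (rule torsion_leE)
    moreover obtain w2' w3 where "torsion_ext v w2'" "torsion_ext v w3" "y = val_ring w2'" "z = val_ring w3"
      using yz by (rule torsion_leE)
    ultimately show "(x, z) \<in> torsion_le v"
      using xy yz torsion_ext_val_ring_eq_iff[of v w2 w2']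
      by (simp add: torsion_le_iff) (blast intro: val_le_trans)
  qed
  show "antisym (torsion_le v)"
  proof (rule antisymI)
    fix x y assume xy: "(x, y) \<in> torsion_le v" and yx: "(y, x) \<in> torsion_le v"
    obtain w1 w2 where "torsion_ext v w1" "torsion_ext v w2" "x = val_ring w1" "y = val_ring w2"
      using xy by (rule torsion_leE)
    with xy yx show "x = y"
      by (simp add: torsion_le_iff torsion_ext_val_ring_eq_iff)
  qed
qed

theorem mainTheorem3:
  fixes v :: "'a::field \<Rightarrow> 'g::linordered_ab_group_add"
    and w1 w2 :: "'a poly fract \<Rightarrow> 'g"
  assumes "valuation v"
    and "torsion_ext v w1" and "torsion_ext v w2"
  shows "(val_le w1 w2 \<longleftrightarrow> val_ring w1 \<inter> Kpoly \<subseteq> val_ring w2 \<inter> Kpoly)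
       \<and> (val_le w1 w2 \<longleftrightarrow> max_ideal (val_ring w1) \<inter> Kpoly \<subseteq> max_ideal (val_ring w2) \<inter> Kpoly)
       \<and> (val_ring w1 = val_ring w2 \<longleftrightarrow> val_ring w1 \<inter> Kpoly = val_ring w2 \<inter> Kpoly)
       \<and> (val_ring w1 = val_ring w2 \<longleftrightarrow> max_ideal (val_ring w1) \<inter> Kpoly = max_ideal (val_ring w2) \<inter> Kpoly)
       \<and> partial_order_on (torsion_exts v) (torsion_le v)"
proof -
  note t = assms(2,3)
  note ring_le = torsion_ext_val_le_iff_val_ring_subset
    and ideal_le = torsion_ext_val_le_iff_max_ideal_subset
  have "val_ring w1 = val_ring w2 \<longleftrightarrow> val_ring w1 \<inter> Kpoly = val_ring w2 \<inter> Kpoly"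
    using torsion_ext_val_ring_eq_iff[OF t] ring_le[OF t] ring_le[OF t(2,1)] by blast
  moreover have "val_ring w1 = val_ring w2 \<longleftrightarrow>
      max_ideal (val_ring w1) \<inter> Kpoly = max_ideal (val_ring w2) \<inter> Kpoly"
    using torsion_ext_val_ring_eq_iff[OF t] ideal_le[OF t] ideal_le[OF t(2,1)] by blast
  ultimately show ?thesis
    using ring_le[OF t] ideal_le[OF t] partial_order_torsion_le by blast
qed

end
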